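(* Let $g=\sum_{\alpha\in[0,1)}m(\alpha)[\alpha]$ be an effective divisor on $[0,1)$ of degree $r\geq1$. Then the minimal number $T(g)$, over all arrangements $a_1,\ldots,a_r$ of $g$, of indices $t\in\{1,\ldots,r\}$ with $a_t\geq a_{t+1}$ (indices modulo $r$, $a_{r+1}=a_1$) equals the maximal multiplicity: $T(g)=\max_\alpha m(\alpha)$.
   Context: An arrangement of $g$ is a sequence $a_1,\ldots,a_r\in[0,1)$ in which each $\alpha$ appears exactly $m(\alpha)$ times. *)

theory Defs
  imports Complex_Main "HOL-Library.Multiset"
begin

text \<open>An effective divisor g on [0,1) is a finite multiset of reals in [0,1);
  m(alpha) = count g alpha, degree = size g.\<close>
definition effective_divisor_01 :: "real multiset \<Rightarrow> bool" where
  "effective_divisor_01 g \<longleftrightarrow> set_mset g \<subseteq> {0..<1}"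

text \<open>An arrangement of g: a sequence a_1..a_r (list, 0-indexed) in which each
  alpha occurs exactly m(alpha) times.\<close>
definition arrangement :: "real multiset \<Rightarrow> real list \<Rightarrow> bool" where
  "arrangement g a \<longleftrightarrow> (\<forall>\<alpha>. count (mset a) \<alpha> = count g \<alpha>)"

definition cyclic_descents :: "real list \<Rightarrow> nat" where
  "cyclic_descents a = card {t. t < length a \<and> a ! t \<ge> a ! ((t + 1) mod length a)}"

definition T :: "real multiset \<Rightarrow> nat" where
  "T g = Min {cyclic_descents a | a. arrangement g a}"

end

theory Submission
  imports Defs
begin

text \<open>An occurrence of \<alpha> at a cyclic position is preceded either by a descent or by an
  ascent across the level \<alpha>.  Around a cycle the ascents across a level are as many as
  the descents across it, and the latter are descents ending below \<alpha>; hence every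
  arrangement has at least m(\<alpha>) cyclic descents.  Conversely, writing down the layers
  {\<alpha>. m(\<alpha>) > k}, k = 0, ..., M - 1 with M = max m, each in increasing order, one after another yields an
  arrangement whose cyclic descents can only sit at the M ends of the layers.\<close>

lemma arrangement_iff_mset: "arrangement g a \<longleftrightarrow> mset a = g"
  by (simp add: arrangement_def multiset_eq_iff)

lemma card_nth_Suc_mod:
  "card {t. t < length a \<and> P (a ! ((t + 1) mod length a))} = card {t. t < length a \<and> P (a ! t)}"
proof -
  have "card {t. t < length a \<and> P (a ! ((t + 1) mod length a))}
        = card {t. t < length (rotate1 a) \<and> P (rotate1 a ! t)}"
    by (rule arg_cong[where f = card]) (auto simp: nth_rotate1)
  also have "\<dots> = length (filter P (rotate1 a))"
    by (rule length_filter_conv_card[symmetric])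
  also have "\<dots> = length (filter P a)"
    by (cases a) simp_all
  finally show ?thesis
    by (simp add: length_filter_conv_card)
qed

lemma card_cyclic_crossings_eq:
  "card {t. t < length a \<and> P (a ! t) \<and> \<not> P (a ! ((t + 1) mod length a))}
   = card {t. t < length a \<and> \<not> P (a ! t) \<and> P (a ! ((t + 1) mod length a))}"
proof -
  let ?A = "{t. t < length a \<and> P (a ! t)}"
  let ?B = "{t. t < length a \<and> P (a ! ((t + 1) mod length a))}"
  have "card ?B = card ?A" by (rule card_nth_Suc_mod)
  then have "card (?A - ?B) = card (?B - ?A)"
    using card_le_sym_Diff[of ?A ?B] card_le_sym_Diff[of ?B ?A] by auto
  moreover have "?A - ?B = {t. t < length a \<and> P (a ! t) \<and> \<not> P (a ! ((t + 1) mod length a))}"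
    and "?B - ?A = {t. t < length a \<and> \<not> P (a ! t) \<and> P (a ! ((t + 1) mod length a))}"
    by auto
  ultimately show ?thesis by simp
qed

lemma count_mset_le_cyclic_descents: "count (mset a) \<alpha> \<le> cyclic_descents a"
proof -
  define nxt where "nxt t = a ! ((t + 1) mod length a)" for t
  define Occ where "Occ = {t. t < length a \<and> nxt t = \<alpha>}"
  define Desc where "Desc = {t. t < length a \<and> a ! t \<ge> nxt t}"
  define Up where "Up = {t. t < length a \<and> a ! t < \<alpha> \<and> \<alpha> \<le> nxt t}"
  define Down where "Down = {t. t < length a \<and> \<alpha> \<le> a ! t \<and> nxt t < \<alpha>}"
  have "count (mset a) \<alpha> = card {t. t < length a \<and> a ! t = \<alpha>}"
    by (simp add: count_mset count_list_eq_length_filter length_filter_conv_card eq_commute)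
  also have "\<dots> = card Occ"
    unfolding Occ_def nxt_def by (rule card_nth_Suc_mod[symmetric])
  also have "\<dots> \<le> card (Occ \<inter> Desc) + card Up"
  proof -
    have "Occ \<subseteq> (Occ \<inter> Desc) \<union> Up" by (auto simp: Occ_def Desc_def Up_def)
    then have "card Occ \<le> card ((Occ \<inter> Desc) \<union> Up)"
      by (rule card_mono[rotated]) (simp add: Up_def Desc_def)
    then show ?thesis
      using card_Un_le order_trans by blast
  qed
  also have "card Up = card Down"
    using card_cyclic_crossings_eq[of a "\<lambda>x. \<alpha> \<le> x"]
    by (simp add: Up_def Down_def nxt_def not_le conj_commute)
  also have "card (Occ \<inter> Desc) + card Down = card ((Occ \<inter> Desc) \<union> Down)"
    by (rule card_Un_disjoint[symmetric]) (auto simp: Occ_def Desc_def Down_def)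
  also have "\<dots> \<le> card Desc"
    by (rule card_mono) (auto simp: Occ_def Desc_def Down_def)
  also have "card Desc = cyclic_descents a"
    by (simp add: Desc_def nxt_def cyclic_descents_def)
  finally show ?thesis .
qed

definition linear_descents :: "'a::linorder list \<Rightarrow> nat" where
  "linear_descents a = card {t. Suc t < length a \<and> a ! t \<ge> a ! Suc t}"

lemma finite_linear_descent_positions: "finite {t. Suc t < length a \<and> a ! t \<ge> a ! Suc t}"
  by (rule finite_subset[of _ "{..<length a}"]) auto

lemma cyclic_descents_le_Suc_linear_descents: "cyclic_descents a \<le> Suc (linear_descents a)"
proof -
  let ?L = "{t. Suc t < length a \<and> a ! t \<ge> a ! Suc t}"
  have "{t. t < length a \<and> a ! t \<ge> a ! ((t + 1) mod length a)} \<subseteq> insert (length a - 1) ?L"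
    by (auto simp: less_diff_conv)
  then have "cyclic_descents a \<le> card (insert (length a - 1) ?L)"
    unfolding cyclic_descents_def
    by (rule card_mono[rotated]) (simp add: finite_linear_descent_positions)
  also have "\<dots> \<le> Suc (linear_descents a)"
    by (simp add: linear_descents_def card_insert_le_m1 card_insert_if finite_linear_descent_positions)
  finally show ?thesis .
qed

lemma linear_descents_append:
  "linear_descents (xs @ ys) \<le> linear_descents xs + linear_descents ys + 1"
proof -
  let ?X = "{t. Suc t < length xs \<and> xs ! t \<ge> xs ! Suc t}"
  let ?Y = "{t. Suc t < length ys \<and> ys ! t \<ge> ys ! Suc t}"
  have "{t. Suc t < length (xs @ ys) \<and> (xs @ ys) ! t \<ge> (xs @ ys) ! Suc t}
        \<subseteq> ?X \<union> {length xs - 1} \<union> (\<lambda>t. t + length xs) ` ?Y"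
  proof
    fix t assume t: "t \<in> {t. Suc t < length (xs @ ys) \<and> (xs @ ys) ! t \<ge> (xs @ ys) ! Suc t}"
    consider "Suc t < length xs" | "Suc t = length xs" | "length xs \<le> t" by linarith
    then show "t \<in> ?X \<union> {length xs - 1} \<union> (\<lambda>t. t + length xs) ` ?Y"
    proof cases
      case 3
      then have "t = (t - length xs) + length xs" and "t - length xs \<in> ?Y"
        using t by (auto simp: nth_append Suc_diff_le)
      then show ?thesis by blast
    qed (use t in \<open>auto simp: nth_append\<close>)
  qed
  then have "linear_descents (xs @ ys) \<le> card (?X \<union> {length xs - 1} \<union> (\<lambda>t. t + length xs) ` ?Y)"
    unfolding linear_descents_def
    by (rule card_mono[rotated]) (simp add: finite_linear_descent_positions)
  also have "\<dots> \<le> card ?X + card {length xs - 1} + card ((\<lambda>t. t + length xs) ` ?Y)"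
    by (meson card_Un_le add_le_mono le_refl order_trans)
  also have "\<dots> \<le> linear_descents xs + linear_descents ys + 1"
    unfolding linear_descents_def
    using card_image_le[OF finite_linear_descent_positions[of ys], of "\<lambda>t. t + length xs"]
    by simp
  finally show ?thesis .
qed

lemma linear_descents_strictly_sorted:
  assumes "sorted_wrt (<) xs"
  shows "linear_descents xs = 0"
proof -
  have "xs ! t < xs ! Suc t" if "Suc t < length xs" for t
    using sorted_wrt_nth_less[OF assms, of t "Suc t"] that by simp
  then have "{t. Suc t < length xs \<and> xs ! t \<ge> xs ! Suc t} = {}"
    by (auto dest: leD)
  then show ?thesis
    unfolding linear_descents_def by (simp only: card.empty)
qed

lemma linear_descents_concat_less:
  assumes "Ls \<noteq> []" and "\<forall>L \<in> set Ls. sorted_wrt (<) L"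
  shows "linear_descents (concat Ls) < length Ls"
  using assms
proof (induction Ls)
  case (Cons L Ls)
  show ?case
  proof (cases "Ls = []")
    case True
    then show ?thesis using Cons.prems by (simp add: linear_descents_strictly_sorted)
  next
    case False
    have "linear_descents (concat (L # Ls)) \<le> linear_descents L + linear_descents (concat Ls) + 1"
      using linear_descents_append by simp
    also have "\<dots> < length (L # Ls)"
      using Cons False by (simp add: linear_descents_strictly_sorted)
    finally show ?thesis .
  qed
qed simp

lemma cyclic_descents_concat_le:
  assumes "\<forall>L \<in> set Ls. sorted_wrt (<) L"
  shows "cyclic_descents (concat Ls) \<le> length Ls"
proof (cases "Ls = []")
  case True
  then show ?thesis by (simp add: cyclic_descents_def)
next
  case False
  then show ?thesis
    using cyclic_descents_le_Suc_linear_descents[of "concat Ls"]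
      linear_descents_concat_less[OF False assms] by linarith
qed

definition layers :: "'a::linorder multiset \<Rightarrow> nat \<Rightarrow> 'a list list" where
  "layers g m = map (\<lambda>k. sorted_list_of_set {x. k < count g x}) [0..<m]"

lemma count_mset_concat_layers:
  fixes g :: "'a::linorder multiset"
  shows "count (mset (concat (layers g m))) x = min (count g x) m"
proof (induction m)
  case (Suc m)
  have "finite {x. m < count g x}"
    by (rule finite_subset[of _ "set_mset g"]) (auto simp flip: count_greater_zero_iff)
  moreover have "mset (sorted_list_of_set A) = mset_set A" for A :: "'a set"
    by (metis mset_sorted_list_of_multiset sorted_list_of_mset_set)
  ultimately have "count (mset (sorted_list_of_set {x. m < count g x})) x = of_bool (m < count g x)"
    by (simp add: count_mset_set')
  then show ?case
    using Suc.IH by (auto simp: layers_def)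
qed (simp add: layers_def)

lemma ex_arrangement_cyclic_descents_le:
  assumes "\<And>x. count g x \<le> m"
  shows "\<exists>a. arrangement g a \<and> cyclic_descents a \<le> m"
proof (intro exI conjI)
  show "arrangement g (concat (layers g m))"
    using assms by (simp add: arrangement_def count_mset_concat_layers min_absorb1)
  show "cyclic_descents (concat (layers g m)) \<le> m"
    using cyclic_descents_concat_le[of "layers g m"] by (simp add: layers_def)
qed

lemma cyclic_descents_le_length: "cyclic_descents a \<le> length a"
  unfolding cyclic_descents_def by (rule order_trans[OF card_mono[of "{..<length a}"]]) auto

lemma T_eq_maximal_count:
  assumes "\<And>x. count g x \<le> count g \<alpha>"
  shows "T g = count g \<alpha>"
proof -
  let ?D = "{cyclic_descents a | a. arrangement g a}"
  have lower: "count g \<alpha> \<le> d" if "d \<in> ?D" for d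
    using that count_mset_le_cyclic_descents by (auto simp: arrangement_iff_mset)
  obtain a where "arrangement g a" and "cyclic_descents a \<le> count g \<alpha>"
    using ex_arrangement_cyclic_descents_le assms by blast
  then have "count g \<alpha> \<in> ?D"
    using lower by (metis (mono_tags, lifting) le_antisym mem_Collect_eq)
  moreover have "finite ?D"
    by (rule finite_subset[of _ "{..size g}"])
      (auto simp: arrangement_iff_mset intro: order_trans[OF cyclic_descents_le_length])
  ultimately show ?thesis
    unfolding T_def using lower by (intro Min_eqI) auto
qed

theorem lemma6p6:
  fixes g :: "real multiset"
  assumes "effective_divisor_01 g"
    and "size g \<ge> 1"
  shows "T g = Max {count g \<alpha> | \<alpha>. \<alpha> \<in> {0..<1}}"
proof -
  let ?S = "{count g \<alpha> | \<alpha>. \<alpha> \<in> {0..<1}}"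
  have "finite ?S"
    by (rule finite_subset[of _ "{..size g}"]) (auto simp: count_le_size)
  then have "Max ?S \<in> ?S"
    by (intro Max_in) auto
  then obtain \<alpha> where "Max ?S = count g \<alpha>"
    by auto
  have "count g x \<le> count g \<alpha>" for x
  proof (cases "x \<in> {0..<1}")
    case True
    then show ?thesis
      using \<open>finite ?S\<close> \<open>Max ?S = count g \<alpha>\<close> by (metis (mono_tags, lifting) Max_ge mem_Collect_eq)
  next
    case False
    then have "x \<notin># g"
      using assms(1) unfolding effective_divisor_01_def by blast
    then show ?thesis
      by (simp add: not_in_iff)
  qed
  then show ?thesis
    using \<open>Max ?S = count g \<alpha>\<close> by (simp add: T_eq_maximal_count)
qed

end
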